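(* (Completeness.) For every formula $\phi$ of the language $\Phi$: if $h\Vdash\phi$ for every history $h$ of every regular epistemic transition system, then $\vdash\phi$.
   Context: Fix a set of agents $\mathcal{A}$. A coalition is a subset of $\mathcal{A}$. The language $\Phi$ is given by $\phi ::= p \mid \neg\phi \mid \phi\to\phi \mid \mathsf{K}_C\phi \mid \mathsf{H}_C\phi$, where $p$ ranges over propositional variables and $C\subseteq\mathcal{A}$; $\bot,\top$ are defined as usual. Axioms: all propositional tautologies of $\Phi$ and (1) Truth: $\mathsf{K}_C\phi\to\phi$; (2) Negative Introspection: $\neg\mathsf{K}_C\phi\to\mathsf{K}_C\neg\mathsf{K}_C\phi$; (3) Distributivity: $\mathsf{K}_C(\phi\to\psi)\to(\mathsf{K}_C\phi\to\mathsf{K}_C\psi)$; (4) Monotonicity: $\mathsf{K}_C\phi\to\mathsf{K}_D\phi$ if $C\subseteq D$; (5) Strategic Positive Introspection: $\mathsf{H}_C\phi\to\mathsf{K}_C\mathsf{H}_C\phi$; (6) Cooperation: $\mathsf{H}_C(\phi\to\psi)\to(\mathsf{H}_D\phi\to\mathsf{H}_{C\cup D}\psi)$ where $C\cap D=\varnothing$; (7) Empty Coalition: $\mathsf{K}_\varnothing\phi\to\mathsf{H}_\varnothing\phi$; (8) Perfect Recall: $\mathsf{H}_D\phi\to\mathsf{H}_D\mathsf{K}_C\phi$ where $D\subseteq C\neq\varnothing$; (9) Unachievability of Falsehood: $\neg\mathsf{H}_C\bot$. $\vdash\phi$ means $\phi$ is derivable from the axioms using Necessitation ($\phi/\mathsf{K}_C\phi$),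 Strategic Necessitation ($\phi/\mathsf{H}_C\phi$) and Modus Ponens. An epistemic transition system is a tuple $(W,\{\sim_a\}_{a\in\mathcal{A}},V,M,\pi)$ with $W$ a set of states, each $\sim_a$ an equivalence relation on $W$, $V$ a nonempty set (domain of choices), $M\subseteq W\times V^{\mathcal{A}}\times W$, and $\pi$ mapping propositional variables to subsets of $W$. It is regular if for every $w\in W$ and $\mathbf{s}\in V^{\mathcal{A}}$ there is $w'$ with $(w,\mathbf{s},w')\in M$. A strategy profile of coalition $C$ is an element of $V^C$; for profiles $\mathbf{s}_1\in V^{C_1},\mathbf{s}_2\in V^{C_2}$ and $C\subseteq C_1\cap C_2$, $\mathbf{s}_1=_C\mathbf{s}_2$ means $(\mathbf{s}_1)_a=(\mathbf{s}_2)_a$ for all $a\in C$. A history is a sequence $(w_0,\mathbf{s}_1,w_1,\dots,\mathbf{s}_n,w_n)$, $n\ge0$, with $w_i\in W$, $\mathbf{s}_i\in V^{\mathcal{A}}$, $(w_i,\mathbf{s}_{i+1},w_{i+1})\in M$ for $i<n$; $hd(h)$ is its last element and $h::\mathbf{s}::w$ denotes extension by $\mathbf{s},w$. For histories $h=(w_0,\mathbf{s}_1,\dots,w_n)$, $h'=(w'_0,\mathbf{s}'_1,\dots,w'_m)$ and agent $a$, $h\approx_a h'$ iff $n=m$, $w_i\sim_a w'_i$ for all $i$, and $(\mathbf{s}_i)_a=(\mathbf{s}'_i)_a$ for all $i$; $h\approx_C h'$ iff $h\approx_a h'$ for all $a\in C$ (so $\approx_\varnothing$ relates any two histories). Satisfaction: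 $h\Vdash p$ iff $hd(h)\in\pi(p)$; Boolean clauses as usual; $h\Vdash\mathsf{K}_C\phi$ iff $h'\Vdash\phi$ for every history $h'$ with $h\approx_C h'$; $h\Vdash\mathsf{H}_C\phi$ iff there is $\mathbf{s}\in V^C$ such that for every history $h'::\mathbf{s}'::w'$ with $h\approx_C h'$ and $\mathbf{s}=_C\mathbf{s}'$ we have $h'::\mathbf{s}'::w'\Vdash\phi$. *)

theory Defs
  imports Main
begin

datatype ('a, 'p) fm =
    Prop 'p
  | Neg "('a, 'p) fm"
  | Imp "('a, 'p) fm" "('a, 'p) fm"
  | K "'a set" "('a, 'p) fm"
  | H "'a set" "('a, 'p) fm"

definition Bot :: "('a, 'p) fm" where
  "Bot = Neg (Imp (Prop undefined) (Prop undefined))"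

fun peval :: "(('a, 'p) fm \<Rightarrow> bool) \<Rightarrow> ('a, 'p) fm \<Rightarrow> bool" where
  "peval g (Neg f) = (\<not> peval g f)"
| "peval g (Imp f1 f2) = (peval g f1 \<longrightarrow> peval g f2)"
| "peval g f = g f"

definition tautology :: "('a, 'p) fm \<Rightarrow> bool" where
  "tautology f = (\<forall>g. peval g f)"

inductive derivable :: "('a, 'p) fm \<Rightarrow> bool" where
  Taut: "tautology f \<Longrightarrow> derivable f"
| Truth: "derivable (Imp (K C f) f)"
| NegIntro: "derivable (Imp (Neg (K C f)) (K C (Neg (K C f))))"
| Distr: "derivable (Imp (K C (Imp f g)) (Imp (K C f) (K C g)))"
| Mono: "C \<subseteq> D \<Longrightarrow> derivable (Imp (K C f) (K D f))"
| StratPosIntro: "derivable (Imp (H C f) (K C (H C f)))"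
| Coop: "C \<inter> D = {} \<Longrightarrow> derivable (Imp (H C (Imp f g)) (Imp (H D f) (H (C \<union> D) g)))"
| EmptyCoal: "derivable (Imp (K {} f) (H {} f))"
| PerfRecall: "D \<subseteq> C \<Longrightarrow> C \<noteq> {} \<Longrightarrow> derivable (Imp (H D f) (H D (K C f)))"
| Unach: "derivable (Neg (H C Bot))"
| Nec: "derivable f \<Longrightarrow> derivable (K C f)"
| SNec: "derivable f \<Longrightarrow> derivable (H C f)"
| MP: "derivable (Imp f g) \<Longrightarrow> derivable f \<Longrightarrow> derivable g"

text \<open>Strategy profiles are total functions on agents; a profile of coalition C is
  any function whose values on C lie in the domain of choices (other values are ignored).\<close>
record ('w, 'a, 'v, 'p) ets =
  St :: "'w set"
  Sim :: "'a \<Rightarrow> ('w \<times> 'w) set"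
  Dom :: "'v set"
  Mech :: "('w \<times> ('a \<Rightarrow> 'v) \<times> 'w) set"
  Val :: "'p \<Rightarrow> 'w set"

definition complete_profiles :: "('w, 'a, 'v, 'p) ets \<Rightarrow> ('a \<Rightarrow> 'v) set" where
  "complete_profiles E = {s. \<forall>a. s a \<in> Dom E}"

definition is_ets :: "('w, 'a, 'v, 'p) ets \<Rightarrow> bool" where
  "is_ets E \<longleftrightarrow>
     (\<forall>a. equiv (St E) (Sim E a)) \<and>
     Dom E \<noteq> {} \<and>
     Mech E \<subseteq> St E \<times> complete_profiles E \<times> St E \<and>
     (\<forall>p. Val E p \<subseteq> St E)"

definition regular :: "('w, 'a, 'v, 'p) ets \<Rightarrow> bool" where
  "regular E \<longleftrightarrow>
     (\<forall>w \<in> St E. \<forall>s \<in> complete_profiles E. \<exists>w'. (w, s, w') \<in> Mech E)"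

text \<open>A history (w0, s1, w1, ..., sn, wn) is represented as (w0, [(s1,w1),...,(sn,wn)]).\<close>
type_synonym ('w, 'a, 'v) hist = "'w \<times> (('a \<Rightarrow> 'v) \<times> 'w) list"

fun steps_ok :: "('w, 'a, 'v, 'p) ets \<Rightarrow> 'w \<Rightarrow> (('a \<Rightarrow> 'v) \<times> 'w) list \<Rightarrow> bool" where
  "steps_ok E w [] = True"
| "steps_ok E w ((s, w') # xs) = ((w, s, w') \<in> Mech E \<and> steps_ok E w' xs)"

definition is_hist :: "('w, 'a, 'v, 'p) ets \<Rightarrow> ('w, 'a, 'v) hist \<Rightarrow> bool" where
  "is_hist E h \<longleftrightarrow> fst h \<in> St E \<and> steps_ok E (fst h) (snd h)"

definition hd_hist :: "('w, 'a, 'v) hist \<Rightarrow> 'w" where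
  "hd_hist h = (if snd h = [] then fst h else snd (last (snd h)))"

definition ext_hist :: "('w, 'a, 'v) hist \<Rightarrow> ('a \<Rightarrow> 'v) \<Rightarrow> 'w \<Rightarrow> ('w, 'a, 'v) hist" where
  "ext_hist h s w = (fst h, snd h @ [(s, w)])"

definition hist_equiv_agent ::
  "('w, 'a, 'v, 'p) ets \<Rightarrow> 'a \<Rightarrow> ('w, 'a, 'v) hist \<Rightarrow> ('w, 'a, 'v) hist \<Rightarrow> bool" where
  "hist_equiv_agent E a h h' \<longleftrightarrow>
     length (snd h) = length (snd h') \<and>
     (fst h, fst h') \<in> Sim E a \<and>
     (\<forall>i < length (snd h). (snd (snd h ! i), snd (snd h' ! i)) \<in> Sim E a) \<and>
     (\<forall>i < length (snd h). fst (snd h ! i) a = fst (snd h' ! i) a)"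

definition hist_equiv ::
  "('w, 'a, 'v, 'p) ets \<Rightarrow> 'a set \<Rightarrow> ('w, 'a, 'v) hist \<Rightarrow> ('w, 'a, 'v) hist \<Rightarrow> bool" where
  "hist_equiv E C h h' \<longleftrightarrow> (\<forall>a \<in> C. hist_equiv_agent E a h h')"

primrec sat :: "('w, 'a, 'v, 'p) ets \<Rightarrow> ('w, 'a, 'v) hist \<Rightarrow> ('a, 'p) fm \<Rightarrow> bool" where
  "sat E h (Prop p) = (hd_hist h \<in> Val E p)"
| "sat E h (Neg f) = (\<not> sat E h f)"
| "sat E h (Imp f g) = (sat E h f \<longrightarrow> sat E h g)"
| "sat E h (K C f) = (\<forall>h'. is_hist E h' \<and> hist_equiv E C h h' \<longrightarrow> sat E h' f)"
| "sat E h (H C f) =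
     (\<exists>s. (\<forall>a \<in> C. s a \<in> Dom E) \<and>
        (\<forall>h' s' w'. is_hist E (ext_hist h' s' w') \<and> hist_equiv E C h h' \<and>
                    (\<forall>a \<in> C. s a = s' a) \<longrightarrow> sat E (ext_hist h' s' w') f))"

text \<open>Since HOL cannot quantify over
  types, states and choices are drawn from fixed, sufficiently large types built from the
  syntax (large enough for the canonical model).\<close>
type_synonym ('a, 'p) univ_state = "('a set \<times> ('a, 'p) fm set) list"

definition valid :: "('a, 'p) fm \<Rightarrow> bool" where
  "valid f \<longleftrightarrow>
     (\<forall>E :: (('a, 'p) univ_state, 'a, ('a, 'p) fm, 'p) ets.
        is_ets E \<and> regular E \<longrightarrow> (\<forall>h. is_hist E h \<longrightarrow> sat E h f))"

end

theory Submission
  imports Defs "HOL-Library.Sublist"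
begin

text \<open>The proof builds a canonical model. A state is a path in a tree whose root is a maximal consistent set R
  containing the negation of the non-derivable formula; an edge labelled by a coalition C leads
  from X to a maximal consistent Y with K_C \<chi> \<in> Y whenever K_C \<chi> \<in> X. Agent a cannot
  distinguish two paths that agree up to some node and carry a on every later edge; by
  introspection and monotonicity, K_C formulas are constant along edges labelled by supersets
  of C, which gives the truth lemma for K. Choices are formulas: under a profile s one may move
  from X to a fresh child Y of the root only if K_D \<psi> \<in> Y for every H_D \<psi> \<in> X on which all
  of D vote. Since each agent casts one vote, the coalitions behind different goals are
  disjoint, so Cooperation shows these requirements are jointly consistent (regularity), while
  Strategic Positive Introspection and Perfect Recall make "all of C vote H_C \<phi>" a strategy
  for H_C \<phi>.\<close>

section \<open>Maximal consistent sets\<close>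

fun imps :: "('a, 'p) fm list \<Rightarrow> ('a, 'p) fm \<Rightarrow> ('a, 'p) fm" where
  "imps [] c = c"
| "imps (x # xs) c = Imp x (imps xs c)"

lemma peval_imps: "peval g (imps L c) = ((\<forall>x\<in>set L. peval g x) \<longrightarrow> peval g c)"
  by (induction L) auto

lemma peval_Bot [simp]: "peval g Bot = False"
  by (simp add: Bot_def)

lemma derivable_imps_MP: "derivable (imps L c) \<Longrightarrow> \<forall>x\<in>set L. derivable x \<Longrightarrow> derivable c"
  by (induction L) (auto intro: derivable.MP)

lemma derivable_by_tautology:
  assumes "\<And>g. \<forall>x\<in>set L. peval g x \<Longrightarrow> peval g c"
    and "\<forall>x\<in>set L. derivable x"
  shows "derivable c"
proof (rule derivable_imps_MP[OF _ assms(2)])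
  show "derivable (imps L c)"
    using assms(1) by (auto intro: derivable.Taut simp: tautology_def peval_imps)
qed

definition consistent :: "('a, 'p) fm set \<Rightarrow> bool" where
  "consistent S \<longleftrightarrow> (\<forall>L. set L \<subseteq> S \<longrightarrow> \<not> derivable (imps L Bot))"

definition mcs :: "('a, 'p) fm set \<Rightarrow> bool" where
  "mcs X \<longleftrightarrow> consistent X \<and> (\<forall>\<phi>. consistent (insert \<phi> X) \<longrightarrow> \<phi> \<in> X)"

lemma inconsistent_insert_derives_Neg:
  assumes "\<not> consistent (insert \<phi> X)"
  shows "\<exists>L. set L \<subseteq> X \<and> derivable (imps L (Neg \<phi>))"
proof -
  obtain L where L: "set L \<subseteq> insert \<phi> X" "derivable (imps L Bot)"
    using assms unfolding consistent_def by blast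
  let ?L = "filter (\<lambda>x. x \<noteq> \<phi>) L"
  have "derivable (imps ?L (Neg \<phi>))"
    by (rule derivable_by_tautology[of "[imps L Bot]"]) (use L in \<open>auto simp: peval_imps\<close>)
  moreover have "set ?L \<subseteq> X" using L by auto
  ultimately show ?thesis by blast
qed

lemma consistent_insert_Neg:
  assumes "\<nexists>L. set L \<subseteq> T \<and> derivable (imps L \<phi>)"
  shows "consistent (insert (Neg \<phi>) T)"
  unfolding consistent_def
proof (intro allI impI notI)
  fix L assume L: "set L \<subseteq> insert (Neg \<phi>) T" "derivable (imps L Bot)"
  let ?L = "filter (\<lambda>x. x \<noteq> Neg \<phi>) L"
  have "derivable (imps ?L \<phi>)"
    by (rule derivable_by_tautology[of "[imps L Bot]"]) (use L in \<open>auto simp: peval_imps\<close>)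
  moreover have "set ?L \<subseteq> T" using L by auto
  ultimately show False using assms by blast
qed

lemma mcs_derives:
  assumes "mcs X" "set L \<subseteq> X" "derivable (imps L \<phi>)"
  shows "\<phi> \<in> X"
proof (rule ccontr)
  assume "\<phi> \<notin> X"
  then have "\<not> consistent (insert \<phi> X)" using assms(1) unfolding mcs_def by blast
  then obtain L' where L': "set L' \<subseteq> X" "derivable (imps L' (Neg \<phi>))"
    using inconsistent_insert_derives_Neg by blast
  have "derivable (imps (L @ L') Bot)"
    by (rule derivable_by_tautology[of "[imps L \<phi>, imps L' (Neg \<phi>)]"])
       (use L' assms in \<open>auto simp: peval_imps\<close>)
  then show False using assms L' unfolding mcs_def consistent_def by auto
qed

lemma mcs_derivable: "mcs X \<Longrightarrow> derivable \<phi> \<Longrightarrow> \<phi> \<in> X"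
  using mcs_derives[of X "[]"] by auto

lemma mcs_Neg_iff:
  assumes "mcs X"
  shows "Neg \<phi> \<in> X \<longleftrightarrow> \<phi> \<notin> X"
proof
  assume "Neg \<phi> \<in> X"
  have "derivable (imps [\<phi>, Neg \<phi>] Bot)"
    by (rule derivable_by_tautology[of "[]"]) auto
  then have "\<not> set [\<phi>, Neg \<phi>] \<subseteq> X"
    using assms unfolding mcs_def consistent_def by blast
  then show "\<phi> \<notin> X" using \<open>Neg \<phi> \<in> X\<close> by simp
next
  assume "\<phi> \<notin> X"
  then have "\<not> consistent (insert \<phi> X)" using assms unfolding mcs_def by blast
  then show "Neg \<phi> \<in> X"
    using inconsistent_insert_derives_Neg mcs_derives[OF assms] by blast
qed

lemma mcs_Imp_iff:
  assumes "mcs X"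
  shows "Imp \<phi> \<psi> \<in> X \<longleftrightarrow> (\<phi> \<in> X \<longrightarrow> \<psi> \<in> X)"
proof (intro iffI impI)
  assume "Imp \<phi> \<psi> \<in> X" "\<phi> \<in> X"
  moreover have "derivable (imps [Imp \<phi> \<psi>, \<phi>] \<psi>)"
    by (rule derivable_by_tautology[of "[]"]) auto
  ultimately show "\<psi> \<in> X" using mcs_derives[OF assms, of "[Imp \<phi> \<psi>, \<phi>]"] by simp
next
  assume "\<phi> \<in> X \<longrightarrow> \<psi> \<in> X"
  then consider "\<psi> \<in> X" | "Neg \<phi> \<in> X" using mcs_Neg_iff[OF assms] by blast
  moreover have "derivable (imps [\<psi>] (Imp \<phi> \<psi>))" "derivable (imps [Neg \<phi>] (Imp \<phi> \<psi>))"
    by (rule derivable_by_tautology[of "[]"]; simp)+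
  ultimately show "Imp \<phi> \<psi> \<in> X"
    using mcs_derives[OF assms, of "[_]"] by cases simp_all
qed

lemma mcs_MP: "mcs X \<Longrightarrow> Imp \<phi> \<psi> \<in> X \<Longrightarrow> \<phi> \<in> X \<Longrightarrow> \<psi> \<in> X"
  using mcs_Imp_iff by blast

lemma mcs_derivable_MP: "mcs X \<Longrightarrow> derivable (Imp \<phi> \<psi>) \<Longrightarrow> \<phi> \<in> X \<Longrightarrow> \<psi> \<in> X"
  using mcs_MP mcs_derivable by blast

lemma lindenbaum:
  assumes "consistent S"
  shows "\<exists>X. S \<subseteq> X \<and> mcs X"
proof -
  let ?A = "{X. S \<subseteq> X \<and> consistent X}"
  have "\<exists>M\<in>?A. \<forall>X\<in>?A. M \<subseteq> X \<longrightarrow> X = M"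
  proof (rule subset_Zorn_nonempty)
    fix \<C> assume \<C>: "\<C> \<noteq> {}" "subset.chain ?A \<C>"
    then have sub: "\<C> \<subseteq> ?A" unfolding subset.chain_def by blast
    have "consistent (\<Union>\<C>)"
      unfolding consistent_def
    proof (intro allI impI)
      fix L assume "set L \<subseteq> \<Union>\<C>"
      then obtain B where "B \<in> \<C>" "set L \<subseteq> B"
        using finite_subset_Union_chain[OF _ _ \<C>] by blast
      then show "\<not> derivable (imps L Bot)" using sub unfolding consistent_def by blast
    qed
    then show "\<Union>\<C> \<in> ?A" using \<C> sub by blast
  qed (use assms in blast)
  then obtain M where M: "M \<in> ?A" "\<forall>X\<in>?A. M \<subseteq> X \<longrightarrow> X = M" by blast
  then have "mcs M" unfolding mcs_def by blast
  then show ?thesis using M by blast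
qed

lemma mcs_K_truth: "mcs X \<Longrightarrow> K C \<phi> \<in> X \<Longrightarrow> \<phi> \<in> X"
  using mcs_derivable_MP derivable.Truth by blast

lemma mcs_K_neg_introspection: "mcs X \<Longrightarrow> K C \<phi> \<notin> X \<Longrightarrow> K C (Neg (K C \<phi>)) \<in> X"
  using mcs_derivable_MP derivable.NegIntro mcs_Neg_iff by metis

lemma mcs_K_mono: "mcs X \<Longrightarrow> K C \<phi> \<in> X \<Longrightarrow> C \<subseteq> D \<Longrightarrow> K D \<phi> \<in> X"
  using mcs_derivable_MP derivable.Mono by metis

lemma mcs_K_derivable_MP: "mcs X \<Longrightarrow> derivable (Imp \<phi> \<psi>) \<Longrightarrow> K C \<phi> \<in> X \<Longrightarrow> K C \<psi> \<in> X"
  using mcs_MP mcs_derivable derivable.Distr derivable.Nec by metis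

lemma mcs_K_pos_introspection:
  assumes "mcs X" "K C \<phi> \<in> X"
  shows "K C (K C \<phi>) \<in> X"
proof -
  have "K C (Neg (K C \<phi>)) \<notin> X"
    using mcs_K_truth[OF assms(1), of C "Neg (K C \<phi>)"] assms mcs_Neg_iff by blast
  then have "K C (Neg (K C (Neg (K C \<phi>)))) \<in> X"
    using mcs_K_neg_introspection[OF assms(1)] by blast
  moreover have "derivable (Imp (Neg (K C (Neg (K C \<phi>)))) (K C \<phi>))"
    by (rule derivable_by_tautology[of "[Imp (Neg (K C \<phi>)) (K C (Neg (K C \<phi>)))]"])
       (auto intro: derivable.NegIntro)
  ultimately show ?thesis using mcs_K_derivable_MP[OF assms(1)] by blast
qed

lemma mcs_K_iff_along_edge:
  assumes "mcs X" "mcs Y" "{\<chi>. K D \<chi> \<in> X} \<subseteq> Y" "C \<subseteq> D"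
  shows "K C \<chi> \<in> X \<longleftrightarrow> K C \<chi> \<in> Y"
proof
  assume "K C \<chi> \<in> X"
  then have "K D (K C \<chi>) \<in> X" using mcs_K_pos_introspection mcs_K_mono assms by blast
  then show "K C \<chi> \<in> Y" using assms by blast
next
  assume "K C \<chi> \<in> Y"
  show "K C \<chi> \<in> X"
  proof (rule ccontr)
    assume "K C \<chi> \<notin> X"
    then have "Neg (K C \<chi>) \<in> Y" using mcs_K_neg_introspection mcs_K_mono assms by blast
    then show False using \<open>K C \<chi> \<in> Y\<close> mcs_Neg_iff assms by blast
  qed
qed

lemma mcs_H_coop:
  "mcs X \<Longrightarrow> H C (Imp \<phi> \<psi>) \<in> X \<Longrightarrow> H D \<phi> \<in> X \<Longrightarrow> C \<inter> D = {} \<Longrightarrow> H (C \<union> D) \<psi> \<in> X"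
  using mcs_MP mcs_derivable derivable.Coop by metis

lemma mcs_H_derivable_MP:
  assumes "mcs X" "H C \<phi> \<in> X" "derivable (Imp \<phi> \<psi>)"
  shows "H C \<psi> \<in> X"
  using mcs_H_coop[OF assms(1) _ assms(2), of "{}"] mcs_derivable[OF assms(1)] derivable.SNec[OF assms(3)]
  by simp

lemma mcs_H_mono:
  assumes "mcs X" "H C \<phi> \<in> X" "C \<subseteq> D"
  shows "H D \<phi> \<in> X"
proof -
  let ?T = "Imp Bot Bot"
  have T: "derivable ?T" by (rule derivable_by_tautology[of "[]"]) auto
  have "H C (Imp ?T \<phi>) \<in> X"
    by (rule mcs_H_derivable_MP[OF assms(1,2)]) (rule derivable_by_tautology[of "[]"], auto)
  moreover have "H (D - C) ?T \<in> X" using mcs_derivable[OF assms(1) derivable.SNec[OF T]] .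
  ultimately have "H (C \<union> (D - C)) \<phi> \<in> X" using mcs_H_coop assms(1) by blast
  then show ?thesis using assms(3) by (simp add: Un_absorb1)
qed

lemma mcs_H_perfect_recall: "mcs X \<Longrightarrow> H D \<phi> \<in> X \<Longrightarrow> D \<subseteq> C \<Longrightarrow> C \<noteq> {} \<Longrightarrow> H D (K C \<phi>) \<in> X"
  using mcs_derivable_MP derivable.PerfRecall by metis

lemma mcs_H_pos_introspection: "mcs X \<Longrightarrow> H C \<phi> \<in> X \<Longrightarrow> K C (H C \<phi>) \<in> X"
  using mcs_derivable_MP derivable.StratPosIntro by metis

lemma mcs_H_Bot: "mcs X \<Longrightarrow> H C Bot \<notin> X"
  using mcs_derivable derivable.Unach mcs_Neg_iff by metis

lemma mcs_K_empty_H: "mcs X \<Longrightarrow> K {} \<phi> \<in> X \<Longrightarrow> H {} \<phi> \<in> X"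
  using mcs_derivable_MP derivable.EmptyCoal by metis

lemma derivable_imps_K: "derivable (imps L \<phi>) \<Longrightarrow> derivable (imps (map (K C) L) (K C \<phi>))"
proof (induction L arbitrary: \<phi>)
  case Nil
  then show ?case by (simp add: derivable.Nec)
next
  case (Cons x L)
  have "derivable (imps L (Imp x \<phi>))"
    by (rule derivable_by_tautology[of "[imps (x # L) \<phi>]"]) (use Cons in \<open>auto simp: peval_imps\<close>)
  then have "derivable (imps (map (K C) L) (K C (Imp x \<phi>)))" using Cons by blast
  then show ?case
    by (intro derivable_by_tautology[of "[imps (map (K C) L) (K C (Imp x \<phi>)),
          Imp (K C (Imp x \<phi>)) (Imp (K C x) (K C \<phi>))]"])
       (auto simp: peval_imps intro: derivable.Distr)
qed

lemma consistent_K_witness: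
  assumes "mcs X" "K C \<phi> \<notin> X"
  shows "consistent (insert (Neg \<phi>) {\<chi>. K C \<chi> \<in> X})"
proof (rule consistent_insert_Neg, rule notI)
  assume "\<exists>L. set L \<subseteq> {\<chi>. K C \<chi> \<in> X} \<and> derivable (imps L \<phi>)"
  then obtain L where "set (map (K C) L) \<subseteq> X" "derivable (imps (map (K C) L) (K C \<phi>))"
    using derivable_imps_K by fastforce
  then show False using mcs_derives assms by blast
qed

section \<open>Combining the goals of a strategy profile\<close>

text \<open>What a coalition D executing its strategy for \<psi> guarantees in the next state: K_D \<psi>,
  or just \<psi> when D is empty, since Perfect Recall only applies to nonempty coalitions.\<close>
definition achieved :: "'a set \<Rightarrow> ('a, 'p) fm \<Rightarrow> ('a, 'p) fm" where
  "achieved D \<psi> = (if D = {} then \<psi> else K D \<psi>)"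

definition backed :: "('a, 'p) fm set \<Rightarrow> ('a \<Rightarrow> ('a, 'p) fm) \<Rightarrow> ('a set \<times> ('a, 'p) fm) set" where
  "backed X s = {(D, \<psi>). H D \<psi> \<in> X \<and> (\<forall>a\<in>D. s a = H D \<psi>)}"

definition guaranteed :: "('a, 'p) fm set \<Rightarrow> ('a \<Rightarrow> ('a, 'p) fm) \<Rightarrow> ('a, 'p) fm set" where
  "guaranteed X s = case_prod achieved ` backed X s"

text \<open>Agents outside C abstain by voting Bot, which is not of the form H_D \<psi>.\<close>
definition restrict_profile :: "'a set \<Rightarrow> ('a \<Rightarrow> ('a, 'p) fm) \<Rightarrow> 'a \<Rightarrow> ('a, 'p) fm" where
  "restrict_profile C s = (\<lambda>a. if a \<in> C then s a else Bot)"

lemma mcs_H_achieved: "mcs X \<Longrightarrow> H D \<psi> \<in> X \<Longrightarrow> H D (achieved D \<psi>) \<in> X"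
  by (auto simp: achieved_def intro: mcs_H_perfect_recall)

lemma mcs_achieved_truth: "mcs X \<Longrightarrow> achieved D \<psi> \<in> X \<Longrightarrow> \<psi> \<in> X"
  by (auto simp: achieved_def split: if_splits intro: mcs_K_truth)

lemma backed_guaranteed: "(D, \<psi>) \<in> backed X s \<Longrightarrow> achieved D \<psi> \<in> guaranteed X s"
  unfolding guaranteed_def by force

lemma backed_restrict_profile:
  assumes "(D, \<psi>) \<in> backed X (restrict_profile C s)"
  shows "D \<subseteq> C" "(D, \<psi>) \<in> backed X s"
proof -
  show "D \<subseteq> C"
    using assms by (auto simp: backed_def restrict_profile_def Bot_def split: if_splits)
  then show "(D, \<psi>) \<in> backed X s"
    using assms unfolding backed_def restrict_profile_def by (auto split: if_splits)
qed

text \<open>Distinct backed goals have disjoint coalitions, as each agent votes for a single goal;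
  hence Cooperation combines them.\<close>
lemma mcs_H_of_backed:
  assumes "mcs X" "distinct P" "set P \<subseteq> backed X s"
    "derivable (imps (map (case_prod achieved) P) \<phi>)"
  shows "H (\<Union>(fst ` set P)) \<phi> \<in> X"
  using assms(2-)
proof (induction P arbitrary: \<phi>)
  case Nil
  then show ?case using assms(1) derivable.SNec mcs_derivable by fastforce
next
  case (Cons x P)
  obtain D \<psi> where x: "x = (D, \<psi>)" by fastforce
  have "derivable (imps (map (case_prod achieved) P) (Imp (achieved D \<psi>) \<phi>))"
    by (rule derivable_by_tautology[of "[imps (map (case_prod achieved) (x # P)) \<phi>]"])
       (use Cons x in \<open>auto simp: peval_imps\<close>)
  then have rest: "H (\<Union>(fst ` set P)) (Imp (achieved D \<psi>) \<phi>) \<in> X" using Cons by auto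
  have D: "H D \<psi> \<in> X" "\<forall>a\<in>D. s a = H D \<psi>" using Cons x by (auto simp: backed_def)
  have "\<Union>(fst ` set P) \<inter> D = {}"
  proof (rule ccontr)
    assume "\<Union>(fst ` set P) \<inter> D \<noteq> {}"
    then obtain a D' \<psi>' where a: "(D', \<psi>') \<in> set P" "a \<in> D'" "a \<in> D" by force
    then have "s a = H D' \<psi>'" using Cons by (auto simp: backed_def)
    then have "(D', \<psi>') = (D, \<psi>)" using D a by auto
    then show False using Cons x a by auto
  qed
  then have "H (\<Union>(fst ` set P) \<union> D) \<phi> \<in> X"
    using mcs_H_coop[OF assms(1) rest mcs_H_achieved[OF assms(1) D(1)]] by blast
  then show ?case using x by (simp add: Un_commute)
qed

lemma mcs_H_of_guaranteed:
  assumes "mcs X" "set L \<subseteq> guaranteed X s" "derivable (imps L \<phi>)"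
  shows "\<exists>U \<subseteq> \<Union>(fst ` backed X s). H U \<phi> \<in> X"
proof -
  obtain P where P: "set P \<subseteq> backed X s" "L = map (case_prod achieved) P"
    using assms(2) lists_image[of "case_prod achieved" "backed X s"]
    unfolding guaranteed_def lists_eq_set by blast
  have "derivable (imps (map (case_prod achieved) (remdups P)) \<phi>)"
    by (rule derivable_by_tautology[of "[imps L \<phi>]"]) (use assms(3) P in \<open>auto simp: peval_imps\<close>)
  then have "H (\<Union>(fst ` set (remdups P))) \<phi> \<in> X"
    using mcs_H_of_backed[OF assms(1), of "remdups P"] P by simp
  moreover have "\<Union>(fst ` set (remdups P)) \<subseteq> \<Union>(fst ` backed X s)" using P(1) by auto
  ultimately show ?thesis by blast
qed

lemma consistent_guaranteed: "mcs X \<Longrightarrow> consistent (guaranteed X s)"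
  unfolding consistent_def using mcs_H_of_guaranteed mcs_H_Bot by blast

lemma consistent_H_witness:
  assumes "mcs X" "H C \<phi> \<notin> X"
  shows "consistent (insert (Neg \<phi>) (guaranteed X (restrict_profile C s)))"
proof (rule consistent_insert_Neg, rule notI)
  assume "\<exists>L. set L \<subseteq> guaranteed X (restrict_profile C s) \<and> derivable (imps L \<phi>)"
  then obtain L where L: "set L \<subseteq> guaranteed X (restrict_profile C s)" "derivable (imps L \<phi>)"
    by blast
  obtain U where U: "U \<subseteq> \<Union>(fst ` backed X (restrict_profile C s))" "H U \<phi> \<in> X"
    using mcs_H_of_guaranteed[OF assms(1) L] by blast
  have "\<Union>(fst ` backed X (restrict_profile C s)) \<subseteq> C"
  proof (rule UN_least)
    fix b assume "b \<in> backed X (restrict_profile C s)"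
    then show "fst b \<subseteq> C" using backed_restrict_profile(1)[of "fst b" "snd b"] by simp
  qed
  then have "H C \<phi> \<in> X" using mcs_H_mono[OF assms(1) U(2)] U(1) by blast
  then show False using assms(2) by contradiction
qed

lemma guaranteed_restrict_profile:
  assumes "mcs X" "mcs Z" "C \<noteq> {}" "guaranteed X s \<subseteq> Z" "{\<chi>. K C \<chi> \<in> Z} \<subseteq> Y"
  shows "guaranteed X (restrict_profile C s) \<subseteq> Y"
proof
  fix \<chi> assume "\<chi> \<in> guaranteed X (restrict_profile C s)"
  then obtain D \<psi> where \<chi>: "\<chi> = achieved D \<psi>" and b: "(D, \<psi>) \<in> backed X (restrict_profile C s)"
    unfolding guaranteed_def by auto
  have DC: "D \<subseteq> C" and bs: "(D, \<psi>) \<in> backed X s" using backed_restrict_profile[OF b] by blast+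
  show "\<chi> \<in> Y"
  proof (cases "D = {}")
    case True
    then have "H {} (K C \<psi>) \<in> X"
      using bs mcs_H_perfect_recall[OF assms(1) _ _ assms(3)] by (simp add: backed_def)
    then have "({}, K C \<psi>) \<in> backed X s" by (simp add: backed_def)
    then have "K C \<psi> \<in> Z" using backed_guaranteed assms(4) by (fastforce simp: achieved_def)
    then show ?thesis using assms(5) True \<chi> by (auto simp: achieved_def)
  next
    case False
    then have "K D \<psi> \<in> Z" using backed_guaranteed[OF bs] assms(4) by (auto simp: achieved_def)
    then have "K C (K D \<psi>) \<in> Z" using mcs_K_pos_introspection mcs_K_mono assms(2) DC by blast
    then show ?thesis using assms(5) False \<chi> by (auto simp: achieved_def)
  qed
qed

section \<open>Canonical states\<close>

definition label :: "('a, 'p) univ_state \<Rightarrow> ('a, 'p) fm set" where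
  "label w = snd (last w)"

lemma label_simps [simp]: "label (w @ [(C, Y)]) = Y" "label [(C, Y)] = Y" "label [(C, Y), (D, Z)] = Z"
  by (simp_all add: label_def)

inductive_set canon_states :: "('a, 'p) fm set \<Rightarrow> ('a, 'p) univ_state set" for R where
  root: "[({}, R)] \<in> canon_states R"
| ext: "w \<in> canon_states R \<Longrightarrow> mcs Y \<Longrightarrow> {\<chi>. K C \<chi> \<in> label w} \<subseteq> Y \<Longrightarrow> w @ [(C, Y)] \<in> canon_states R"

lemma canon_states_mcs:
  assumes "mcs R" "w \<in> canon_states R"
  shows "mcs (label w)"
  using assms(2) by induction (simp_all add: assms(1))

lemma canon_states_not_Nil: "w \<in> canon_states R \<Longrightarrow> w \<noteq> []"
  by (induction rule: canon_states.induct) auto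

lemma canon_states_root_prefix: "w \<in> canon_states R \<Longrightarrow> \<exists>u. w = [({}, R)] @ u"
  by (induction rule: canon_states.induct) auto

lemma canon_states_prefix_K_iff:
  assumes "mcs R" "w \<in> canon_states R" "w = p @ u" "p \<noteq> []" "\<forall>x\<in>set u. C \<subseteq> fst x"
  shows "p \<in> canon_states R \<and> (K C \<chi> \<in> label p \<longleftrightarrow> K C \<chi> \<in> label w)"
  using assms(2-)
proof (induction arbitrary: u rule: canon_states.induct)
  case root
  then have "u = []" by (cases p) auto
  then show ?case using root canon_states.root by auto
next
  case (ext w Y D)
  show ?case
  proof (cases u rule: rev_exhaust)
    case Nil
    then show ?thesis using ext canon_states.ext[OF ext.hyps] by simp
  next
    case (snoc u0 x)
    then have "w = p @ u0" "x = (D, Y)" using ext by auto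
    then have "C \<subseteq> D" "p \<in> canon_states R \<and> (K C \<chi> \<in> label p \<longleftrightarrow> K C \<chi> \<in> label w)"
      using ext snoc by auto
    moreover have "K C \<chi> \<in> label w \<longleftrightarrow> K C \<chi> \<in> Y"
      using mcs_K_iff_along_edge ext canon_states_mcs[OF assms(1)] \<open>C \<subseteq> D\<close> by blast
    ultimately show ?thesis by simp
  qed
qed

lemma canon_states_K_empty_iff:
  "mcs R \<Longrightarrow> w \<in> canon_states R \<Longrightarrow> K {} \<chi> \<in> label w \<longleftrightarrow> K {} \<chi> \<in> R"
  using canon_states_root_prefix[of w R] canon_states_prefix_K_iff[of R w "[({}, R)]" _ "{}" \<chi>]
  by auto

lemma canon_states_root_child:
  assumes "mcs R" "w \<in> canon_states R" "mcs Y" "{\<chi>. K {} \<chi> \<in> label w} \<subseteq> Y"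
  shows "[({}, R), ({}, Y)] \<in> canon_states R"
  using canon_states.ext[OF canon_states.root assms(3), of "{}"] assms
    canon_states_K_empty_iff[OF assms(1,2)] by auto

definition canon_sim :: "('a, 'p) fm set \<Rightarrow> 'a \<Rightarrow> (('a, 'p) univ_state \<times> ('a, 'p) univ_state) set" where
  "canon_sim R a = {(w, w'). w \<in> canon_states R \<and> w' \<in> canon_states R \<and>
     (\<exists>p u u'. p \<noteq> [] \<and> w = p @ u \<and> w' = p @ u' \<and> (\<forall>x\<in>set u. a \<in> fst x) \<and> (\<forall>x\<in>set u'. a \<in> fst x))}"

lemma canon_sim_refl: "w \<in> canon_states R \<Longrightarrow> (w, w) \<in> canon_sim R a"
  unfolding canon_sim_def using canon_states_not_Nil by fastforce

lemma canon_sim_child: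
  "w \<in> canon_states R \<Longrightarrow> w @ [(C, Y)] \<in> canon_states R \<Longrightarrow> a \<in> C \<Longrightarrow> (w, w @ [(C, Y)]) \<in> canon_sim R a"
  unfolding canon_sim_def using canon_states_not_Nil by fastforce

lemma canon_sim_trans: "trans (canon_sim R a)"
  unfolding trans_def
proof (intro allI impI)
  fix w1 w2 w3 assume sim: "(w1, w2) \<in> canon_sim R a" "(w2, w3) \<in> canon_sim R a"
  then have states: "w1 \<in> canon_states R" "w3 \<in> canon_states R" by (auto simp: canon_sim_def)
  obtain p u u' where p: "p \<noteq> []" "w1 = p @ u" "w2 = p @ u'"
    and u: "\<forall>x\<in>set u. a \<in> fst x" "\<forall>x\<in>set u'. a \<in> fst x"
    using sim(1) unfolding canon_sim_def by blast
  obtain q v v' where q: "q \<noteq> []" "w2 = q @ v" "w3 = q @ v'"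
    and v: "\<forall>x\<in>set v. a \<in> fst x" "\<forall>x\<in>set v'. a \<in> fst x"
    using sim(2) unfolding canon_sim_def by blast
  obtain r where "p = q @ r \<and> r @ u' = v \<or> p @ r = q \<and> u' = r @ v"
    using p(3) q(2) append_eq_append_conv2[of p u' q v] by auto
  then show "(w1, w3) \<in> canon_sim R a"
  proof
    assume "p = q @ r \<and> r @ u' = v"
    then have "w1 = q @ (r @ u)" "\<forall>x\<in>set (r @ u). a \<in> fst x" using p(2) u v by auto
    then show ?thesis using states q(1,3) v(2) unfolding canon_sim_def by blast
  next
    assume "p @ r = q \<and> u' = r @ v"
    then have "w3 = p @ (r @ v')" "\<forall>x\<in>set (r @ v'). a \<in> fst x" using q(3) u v by auto
    then show ?thesis using states p(1,2) u(1) unfolding canon_sim_def by blast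
  qed
qed

lemma canon_sim_equiv: "equiv (canon_states R) (canon_sim R a)"
proof (rule equivI)
  show "canon_sim R a \<subseteq> canon_states R \<times> canon_states R" by (auto simp: canon_sim_def)
  show "refl_on (canon_states R) (canon_sim R a)"
    unfolding refl_on_def by (intro ballI canon_sim_refl)
  show "sym (canon_sim R a)" unfolding sym_def canon_sim_def by blast
qed (rule canon_sim_trans)

lemma canon_sim_beyond_common_prefix:
  assumes "(w, w') \<in> canon_sim R a"
  defines "q \<equiv> longest_common_prefix w w'"
  shows "q \<noteq> []" "\<forall>x\<in>set (drop (length q) w). a \<in> fst x" "\<forall>x\<in>set (drop (length q) w'). a \<in> fst x"
proof -
  obtain p u u' where p: "p \<noteq> []" "w = p @ u" "w' = p @ u'"
    and u: "\<forall>x\<in>set u. a \<in> fst x" "\<forall>x\<in>set u'. a \<in> fst x"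
    using assms(1) unfolding canon_sim_def by blast
  then obtain r where r: "q = p @ r"
    using longest_common_prefix_max_prefix[of p w w'] unfolding q_def prefix_def by auto
  then show "q \<noteq> []" using p by simp
  have "prefix q w" "prefix q w'"
    unfolding q_def by (rule longest_common_prefix_prefix1, rule longest_common_prefix_prefix2)
  then have "drop (length q) w = drop (length r) u" "drop (length q) w' = drop (length r) u'"
    using p r by (auto simp: prefix_def)
  then show "\<forall>x\<in>set (drop (length q) w). a \<in> fst x" "\<forall>x\<in>set (drop (length q) w'). a \<in> fst x"
    using u by (metis in_set_dropD)+
qed

lemma canon_sim_K:
  assumes R: "mcs R" and "C \<noteq> {}" and sim: "\<forall>a\<in>C. (w, w') \<in> canon_sim R a" and "K C \<chi> \<in> label w"
  shows "K C \<chi> \<in> label w'"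
proof -
  let ?q = "longest_common_prefix w w'"
  obtain a where "a \<in> C" using assms(2) by blast
  then have q: "?q \<noteq> []" using canon_sim_beyond_common_prefix(1)[of w w' R a] sim by blast
  have "\<forall>x\<in>set (drop (length ?q) w). C \<subseteq> fst x" "\<forall>x\<in>set (drop (length ?q) w'). C \<subseteq> fst x"
    using canon_sim_beyond_common_prefix(2,3)[of w w' R] sim by blast+
  moreover have "w = ?q @ drop (length ?q) w" "w' = ?q @ drop (length ?q) w'"
    by (metis append_take_drop_id longest_common_prefix_prefix1 longest_common_prefix_prefix2
        prefix_def append_eq_conv_conj)+
  moreover have "w \<in> canon_states R" "w' \<in> canon_states R"
    using sim assms(2) unfolding canon_sim_def by auto
  ultimately show ?thesis
    using canon_states_prefix_K_iff[OF R, of _ ?q _ C \<chi>] q assms(4) by blast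
qed

section \<open>Canonical model\<close>

definition canon_mech :: "('a, 'p) fm set \<Rightarrow> (('a, 'p) univ_state \<times> ('a \<Rightarrow> ('a, 'p) fm) \<times> ('a, 'p) univ_state) set" where
  "canon_mech R = {(w, s, w'). w \<in> canon_states R \<and> w' \<in> canon_states R \<and> guaranteed (label w) s \<subseteq> label w'}"

definition canon :: "('a, 'p) fm set \<Rightarrow> (('a, 'p) univ_state, 'a, ('a, 'p) fm, 'p) ets" where
  "canon R = \<lparr>St = canon_states R, Sim = canon_sim R, Dom = UNIV, Mech = canon_mech R,
              Val = (\<lambda>p. {w \<in> canon_states R. Prop p \<in> label w})\<rparr>"

lemma canon_simps [simp]:
  "St (canon R) = canon_states R" "Sim (canon R) = canon_sim R" "Dom (canon R) = UNIV"
  "Mech (canon R) = canon_mech R" "Val (canon R) = (\<lambda>p. {w \<in> canon_states R. Prop p \<in> label w})"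
  by (simp_all add: canon_def)

lemma canon_mech_root_child:
  assumes "mcs R" "w \<in> canon_states R" "mcs Y" "guaranteed (label w) s \<subseteq> Y"
  shows "(w, s, [({}, R), ({}, Y)]) \<in> canon_mech R"
proof -
  have "{\<chi>. K {} \<chi> \<in> label w} \<subseteq> Y"
  proof
    fix \<chi> assume "\<chi> \<in> {\<chi>. K {} \<chi> \<in> label w}"
    then have "H {} \<chi> \<in> label w" using mcs_K_empty_H canon_states_mcs[OF assms(1,2)] by simp
    then have "({}, \<chi>) \<in> backed (label w) s" by (simp add: backed_def)
    then show "\<chi> \<in> Y" using backed_guaranteed assms(4) by (fastforce simp: achieved_def)
  qed
  then show ?thesis
    using canon_states_root_child assms unfolding canon_mech_def by simp
qed

lemma canon_ets: "is_ets (canon R)"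
  unfolding is_ets_def complete_profiles_def
  by (auto simp: canon_sim_equiv canon_mech_def)

lemma canon_regular:
  assumes "mcs R"
  shows "regular (canon R)"
  unfolding regular_def
proof (intro ballI)
  fix w s assume "w \<in> St (canon R)"
  then have w: "w \<in> canon_states R" by simp
  obtain Y where "guaranteed (label w) s \<subseteq> Y" "mcs Y"
    using consistent_guaranteed canon_states_mcs[OF assms w] lindenbaum by blast
  then show "\<exists>w'. (w, s, w') \<in> Mech (canon R)"
    using canon_mech_root_child[OF assms w] by auto
qed

section \<open>Histories\<close>

lemma hd_hist_Nil [simp]: "hd_hist (w, []) = w"
  by (simp add: hd_hist_def)

lemma hd_hist_Cons: "hd_hist (w, x # xs) = hd_hist (snd x, xs)"
  by (cases xs) (auto simp: hd_hist_def)

lemma hd_hist_ext [simp]: "hd_hist (ext_hist h s w) = w"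
  by (simp add: hd_hist_def ext_hist_def)

lemma steps_ok_append:
  "steps_ok E w (xs @ ys) \<longleftrightarrow> steps_ok E w xs \<and> steps_ok E (hd_hist (w, xs)) ys"
proof (induction xs arbitrary: w)
  case (Cons x xs)
  then show ?case by (cases x) (simp add: hd_hist_Cons)
qed simp

lemma is_hist_ext: "is_hist E (ext_hist h s w) \<longleftrightarrow> is_hist E h \<and> (hd_hist h, s, w) \<in> Mech E"
  by (simp add: is_hist_def ext_hist_def steps_ok_append)

lemma steps_ok_states:
  "Mech E \<subseteq> St E \<times> UNIV \<times> St E \<Longrightarrow> steps_ok E w xs \<Longrightarrow> \<forall>x\<in>set xs. snd x \<in> St E"
proof (induction xs arbitrary: w)
  case (Cons x xs)
  then show ?case by (cases x) auto
qed simp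

lemma hist_equiv_agent_ext:
  assumes "hist_equiv_agent E a h h'" "(w, w') \<in> Sim E a" "s a = s' a"
  shows "hist_equiv_agent E a (ext_hist h s w) (ext_hist h' s' w')"
proof -
  let ?xs = "snd h @ [(s, w)]" and ?xs' = "snd h' @ [(s', w')]"
  have l: "length (snd h') = length (snd h)" and f: "(fst h, fst h') \<in> Sim E a"
    and steps: "\<forall>i < length (snd h). (snd (snd h ! i), snd (snd h' ! i)) \<in> Sim E a
      \<and> fst (snd h ! i) a = fst (snd h' ! i) a"
    using assms(1) by (simp_all add: hist_equiv_agent_def)
  have "(snd (?xs ! i), snd (?xs' ! i)) \<in> Sim E a \<and> fst (?xs ! i) a = fst (?xs' ! i) a"
    if "i < Suc (length (snd h))" for i
  proof (cases "i < length (snd h)")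
    case True
    then show ?thesis using steps l by (simp add: nth_append)
  next
    case False
    then have "i = length (snd h)" using that by simp
    then show ?thesis using assms(2,3) l by (simp add: nth_append)
  qed
  then show ?thesis using l f unfolding hist_equiv_agent_def ext_hist_def by simp
qed

lemma hist_equiv_ext:
  assumes "hist_equiv E C h h'" "\<forall>a\<in>C. (w, w') \<in> Sim E a \<and> s a = s' a"
  shows "hist_equiv E C (ext_hist h s w) (ext_hist h' s' w')"
  unfolding hist_equiv_def
proof
  fix a assume "a \<in> C"
  then show "hist_equiv_agent E a (ext_hist h s w) (ext_hist h' s' w')"
    using assms unfolding hist_equiv_def by (intro hist_equiv_agent_ext) simp_all
qed

lemma hist_equiv_agent_hd:
  assumes "hist_equiv_agent E a h h'"
  shows "(hd_hist h, hd_hist h') \<in> Sim E a"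
proof (cases "snd h = []")
  case False
  have "length (snd h') = length (snd h)" using assms by (simp add: hist_equiv_agent_def)
  moreover from this have "snd h' \<noteq> []" using False by auto
  moreover have "length (snd h) - 1 < length (snd h)" using False by simp
  ultimately show ?thesis using assms False by (simp add: hist_equiv_agent_def hd_hist_def last_conv_nth)
qed (use assms in \<open>simp add: hist_equiv_agent_def hd_hist_def\<close>)

lemma canon_hist_states:
  assumes "is_hist (canon R) h"
  shows "fst h \<in> canon_states R" "\<forall>x\<in>set (snd h). snd x \<in> canon_states R" "hd_hist h \<in> canon_states R"
proof -
  show fst: "fst h \<in> canon_states R" using assms by (simp add: is_hist_def)
  have "Mech (canon R) \<subseteq> St (canon R) \<times> UNIV \<times> St (canon R)" by (auto simp: canon_mech_def)
  then show snd: "\<forall>x\<in>set (snd h). snd x \<in> canon_states R"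
    using steps_ok_states assms by (fastforce simp: is_hist_def)
  show "hd_hist h \<in> canon_states R"
    using fst snd by (auto simp: hd_hist_def)
qed

lemma canon_hist_equiv_refl:
  assumes "is_hist (canon R) h"
  shows "hist_equiv (canon R) C h h"
  unfolding hist_equiv_def hist_equiv_agent_def
  using canon_hist_states[OF assms] by (auto intro!: canon_sim_refl)

section \<open>Truth lemma\<close>

lemma canon_K_transfer:
  assumes R: "mcs R" and h: "is_hist (canon R) h" "is_hist (canon R) h'"
    and "hist_equiv (canon R) C h h'" "K C \<chi> \<in> label (hd_hist h)"
  shows "K C \<chi> \<in> label (hd_hist h')"
proof (cases "C = {}")
  case True
  then show ?thesis using canon_states_K_empty_iff[OF R] canon_hist_states(3) h assms(5) by blast
next
  case False
  have "\<forall>a\<in>C. (hd_hist h, hd_hist h') \<in> canon_sim R a"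
    using hist_equiv_agent_hd assms(4) unfolding hist_equiv_def by fastforce
  then show ?thesis using canon_sim_K R False assms(5) by blast
qed

lemma canon_hist_redirect_last:
  assumes R: "mcs R" and h: "is_hist (canon R) (ext_hist h0 s w)"
    and "C \<noteq> {}" "mcs Y" "{\<chi>. K C \<chi> \<in> label w} \<subseteq> Y"
  shows "is_hist (canon R) (ext_hist h0 (restrict_profile C s) (w @ [(C, Y)]))"
    "hist_equiv (canon R) C (ext_hist h0 s w) (ext_hist h0 (restrict_profile C s) (w @ [(C, Y)]))"
proof -
  have h0: "is_hist (canon R) h0" and mech: "(hd_hist h0, s, w) \<in> canon_mech R"
    using h by (simp_all add: is_hist_ext)
  then have w0: "hd_hist h0 \<in> canon_states R" and w: "w \<in> canon_states R"
    and guar: "guaranteed (label (hd_hist h0)) s \<subseteq> label w"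
    by (simp_all add: canon_mech_def)
  have w': "w @ [(C, Y)] \<in> canon_states R" using canon_states.ext[OF w assms(4,5)] .
  have "guaranteed (label (hd_hist h0)) (restrict_profile C s) \<subseteq> label (w @ [(C, Y)])"
    using guaranteed_restrict_profile[OF canon_states_mcs[OF R w0] canon_states_mcs[OF R w]
        assms(3) guar assms(5)] by simp
  then show "is_hist (canon R) (ext_hist h0 (restrict_profile C s) (w @ [(C, Y)]))"
    using h0 w0 w' by (simp add: is_hist_ext canon_mech_def)
  show "hist_equiv (canon R) C (ext_hist h0 s w) (ext_hist h0 (restrict_profile C s) (w @ [(C, Y)]))"
    using canon_hist_equiv_refl[OF h0] canon_sim_child[OF w w']
    by (intro hist_equiv_ext) (simp_all add: restrict_profile_def)
qed

lemma canon_K_counterexample: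
  assumes R: "mcs R" and h: "is_hist (canon R) h" and nK: "K C \<phi> \<notin> label (hd_hist h)"
  shows "\<exists>h'. is_hist (canon R) h' \<and> hist_equiv (canon R) C h h' \<and> \<phi> \<notin> label (hd_hist h')"
proof -
  have hw: "hd_hist h \<in> canon_states R" using canon_hist_states(3)[OF h] .
  obtain Y where "insert (Neg \<phi>) {\<chi>. K C \<chi> \<in> label (hd_hist h)} \<subseteq> Y" "mcs Y"
    using lindenbaum[OF consistent_K_witness[OF canon_states_mcs[OF R hw] nK]] by blast
  then have Y: "{\<chi>. K C \<chi> \<in> label (hd_hist h)} \<subseteq> Y" "Neg \<phi> \<in> Y" "mcs Y" by simp_all
  then have nY: "\<phi> \<notin> Y" using mcs_Neg_iff by blast
  show ?thesis
  proof (cases "C = {}")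
    case True
    let ?h' = "([({}, R), ({}, Y)], [])"
    have "is_hist (canon R) ?h'"
      using canon_states_root_child[OF R hw Y(3)] Y(1) True by (simp add: is_hist_def)
    moreover have "hist_equiv (canon R) C h ?h'" using True by (simp add: hist_equiv_def)
    ultimately show ?thesis using nY by (intro exI[of _ ?h']) simp
  next
    case False
    show ?thesis
    proof (cases "snd h" rule: rev_exhaust)
      case Nil
      let ?w = "fst h @ [(C, Y)]"
      have f: "fst h \<in> canon_states R" using canon_hist_states(1)[OF h] .
      have "hd_hist h = fst h" using Nil by (simp add: hd_hist_def)
      then have w: "?w \<in> canon_states R" using canon_states.ext[OF f Y(3)] Y(1) by simp
      then have "is_hist (canon R) (?w, [])" by (simp add: is_hist_def)
      moreover have "hist_equiv (canon R) C h (?w, [])"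
        using Nil canon_sim_child[OF f w] by (simp add: hist_equiv_def hist_equiv_agent_def)
      ultimately show ?thesis using nY by (intro exI[of _ "(?w, [])"]) simp
    next
      case (snoc xs x)
      obtain s w where "x = (s, w)" by fastforce
      then have h_ext: "h = ext_hist (fst h, xs) s w" using snoc by (simp add: ext_hist_def prod_eq_iff)
      let ?h' = "ext_hist (fst h, xs) (restrict_profile C s) (w @ [(C, Y)])"
      have "hd_hist h = w" by (subst h_ext) simp
      then have "is_hist (canon R) ?h' \<and> hist_equiv (canon R) C h ?h'"
        using canon_hist_redirect_last[OF R _ False Y(3)] h h_ext Y(1) by metis
      then show ?thesis using nY by (intro exI[of _ ?h']) simp
    qed
  qed
qed

lemma canon_H_achieves:
  assumes R: "mcs R" and h: "is_hist (canon R) h" and "H C \<phi> \<in> label (hd_hist h)"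
    and ext: "is_hist (canon R) (ext_hist h' s' w')" and "hist_equiv (canon R) C h h'"
    and vote: "\<forall>a\<in>C. s' a = H C \<phi>"
  shows "\<phi> \<in> label w'"
proof -
  have h': "is_hist (canon R) h'" and mech: "(hd_hist h', s', w') \<in> canon_mech R"
    using ext by (simp_all add: is_hist_ext)
  have "K C (H C \<phi>) \<in> label (hd_hist h)"
    using mcs_H_pos_introspection canon_states_mcs[OF R canon_hist_states(3)[OF h]] assms(3) by blast
  then have "H C \<phi> \<in> label (hd_hist h')"
    using canon_K_transfer[OF R h h' assms(5)] mcs_K_truth canon_states_mcs[OF R]
      canon_hist_states(3)[OF h'] by blast
  then have "achieved C \<phi> \<in> guaranteed (label (hd_hist h')) s'"
    using vote by (intro backed_guaranteed) (simp add: backed_def)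
  moreover have "guaranteed (label (hd_hist h')) s' \<subseteq> label w'" "w' \<in> canon_states R"
    using mech by (auto simp: canon_mech_def)
  ultimately show ?thesis using mcs_achieved_truth canon_states_mcs[OF R] by blast
qed

lemma canon_H_counterexample:
  assumes R: "mcs R" and h: "is_hist (canon R) h" and nH: "H C \<phi> \<notin> label (hd_hist h)"
  shows "\<exists>s' w'. is_hist (canon R) (ext_hist h s' w') \<and> (\<forall>a\<in>C. s a = s' a) \<and> \<phi> \<notin> label w'"
proof -
  have hw: "hd_hist h \<in> canon_states R" using canon_hist_states(3)[OF h] .
  obtain Y where "insert (Neg \<phi>) (guaranteed (label (hd_hist h)) (restrict_profile C s)) \<subseteq> Y" "mcs Y"
    using lindenbaum[OF consistent_H_witness[OF canon_states_mcs[OF R hw] nH]] by blast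
  then have Y: "guaranteed (label (hd_hist h)) (restrict_profile C s) \<subseteq> Y" "Neg \<phi> \<in> Y" "mcs Y"
    by simp_all
  then have "is_hist (canon R) (ext_hist h (restrict_profile C s) [({}, R), ({}, Y)])"
    using canon_mech_root_child[OF R hw] h by (simp add: is_hist_ext)
  moreover have "\<phi> \<notin> Y" using Y mcs_Neg_iff by blast
  ultimately show ?thesis by (force simp: restrict_profile_def)
qed

lemma canon_sat_K_iff:
  assumes R: "mcs R" and h: "is_hist (canon R) h"
    and IH: "\<And>h'. is_hist (canon R) h' \<Longrightarrow> sat (canon R) h' \<phi> \<longleftrightarrow> \<phi> \<in> label (hd_hist h')"
  shows "sat (canon R) h (K C \<phi>) \<longleftrightarrow> K C \<phi> \<in> label (hd_hist h)"
proof
  assume sat: "sat (canon R) h (K C \<phi>)"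
  show "K C \<phi> \<in> label (hd_hist h)"
  proof (rule ccontr)
    assume "K C \<phi> \<notin> label (hd_hist h)"
    then obtain h' where h': "is_hist (canon R) h'" "hist_equiv (canon R) C h h'"
      and "\<phi> \<notin> label (hd_hist h')"
      using canon_K_counterexample[OF R h] by blast
    moreover have "sat (canon R) h' \<phi>" using sat h' by (simp only: sat.simps)
    ultimately show False using IH[OF h'(1)] by simp
  qed
next
  assume K: "K C \<phi> \<in> label (hd_hist h)"
  have "sat (canon R) h' \<phi>" if h': "is_hist (canon R) h'" "hist_equiv (canon R) C h h'" for h'
    using canon_K_transfer[OF R h h' K] mcs_K_truth canon_states_mcs[OF R canon_hist_states(3)[OF h'(1)]]
      IH[OF h'(1)] by blast
  then show "sat (canon R) h (K C \<phi>)" by (simp only: sat.simps) blast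
qed

lemma canon_sat_H_iff:
  assumes R: "mcs R" and h: "is_hist (canon R) h"
    and IH: "\<And>h' s' w'. is_hist (canon R) (ext_hist h' s' w') \<Longrightarrow>
      sat (canon R) (ext_hist h' s' w') \<phi> \<longleftrightarrow> \<phi> \<in> label w'"
  shows "sat (canon R) h (H C \<phi>) \<longleftrightarrow> H C \<phi> \<in> label (hd_hist h)"
proof
  assume "sat (canon R) h (H C \<phi>)"
  then obtain s where "\<forall>h' s' w'. is_hist (canon R) (ext_hist h' s' w') \<and> hist_equiv (canon R) C h h'
      \<and> (\<forall>a\<in>C. s a = s' a) \<longrightarrow> sat (canon R) (ext_hist h' s' w') \<phi>"
    by (auto simp del: canon_simps)
  then show "H C \<phi> \<in> label (hd_hist h)"
    using canon_H_counterexample[OF R h, of C \<phi> s] canon_hist_equiv_refl[OF h] IH by blast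
next
  assume "H C \<phi> \<in> label (hd_hist h)"
  then show "sat (canon R) h (H C \<phi>)"
    using canon_H_achieves[OF R h] IH by (auto intro!: exI[of _ "\<lambda>_. H C \<phi>"])
qed

lemma truth_lemma:
  assumes R: "mcs R" and "is_hist (canon R) h"
  shows "sat (canon R) h \<phi> \<longleftrightarrow> \<phi> \<in> label (hd_hist h)"
  using assms(2)
proof (induction \<phi> arbitrary: h)
  case (Prop p)
  then show ?case using canon_hist_states(3)[OF Prop.prems] by simp
next
  case (Neg \<phi>)
  then show ?case
    using mcs_Neg_iff[OF canon_states_mcs[OF R canon_hist_states(3)[OF Neg.prems]]] by simp
next
  case (Imp \<phi> \<psi>)
  then show ?case
    using mcs_Imp_iff[OF canon_states_mcs[OF R canon_hist_states(3)[OF Imp.prems]]] by simp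
next
  case (K C \<phi>)
  then show ?case using canon_sat_K_iff[OF R] by blast
next
  case (H C \<phi>)
  then show ?case using canon_sat_H_iff[OF R] by simp
qed

theorem theorem2:
  fixes f :: "('a, 'p) fm"
  assumes "valid f"
  shows "derivable f"
proof (rule ccontr)
  assume "\<not> derivable f"
  then have "consistent (insert (Neg f) {})"
    by (intro consistent_insert_Neg) simp
  then obtain R where R: "Neg f \<in> R" "mcs R" using lindenbaum by blast
  let ?h = "([({}, R)], []) :: ('a, 'p) univ_state \<times> (('a \<Rightarrow> ('a, 'p) fm) \<times> ('a, 'p) univ_state) list"
  have h: "is_hist (canon R) ?h" by (simp add: is_hist_def canon_states.root)
  then have "sat (canon R) ?h f"
    using assms canon_ets canon_regular[OF R(2)] unfolding valid_def by blast
  then have "f \<in> R" using truth_lemma[OF R(2) h] by simp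
  then show False using R mcs_Neg_iff by blast
qed

end
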